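(* Let $(A,[\cdot,\cdot])$ be a Malcev algebra, $(V;[\cdot,\cdot]_V,\rho)$ an $A$-module Malcev algebra, $\lambda\in\mathbb{K}$, and $T:V\to A$ a $\lambda$-weighted $\mathcal{O}$-operator associated to $(V;[\cdot,\cdot]_V,\rho)$. Then $V$ with the bracket $[a,b]_T=\rho(T(a))b-\rho(T(b))a+\lambda[a,b]_V$ is a Malcev algebra, and $T:(V,[\cdot,\cdot]_T)\to(A,[\cdot,\cdot])$ is a homomorphism of Malcev algebras.
   Context: Field $\mathbb{K}$ of characteristic zero. A Malcev algebra is a vector space with anti-symmetric bracket satisfying $J(x,y,[x,z])=[J(x,y,z),x]$, $J(x,y,z)=[[x,y],z]+[[z,x],y]+[[y,z],x]$. A representation of $A$ on $V$ is linear $\rho:A\to\mathrm{End}(V)$ with $\rho([[x,y],z])=\rho(x)\rho(y)\rho(z)-\rho(z)\rho(x)\rho(y)+\rho(y)\rho([z,x])-\rho([y,z])\rho(x)$. An $A$-module Malcev algebra $(V;[\cdot,\cdot]_V,\rho)$ is a Malcev algebra $(V,[\cdot,\cdot]_V)$ with a representation $\rho$ such that for $x,y\in A$, $a,b,c\in V$: $\rho([x,y])[a,b]_V=\rho(x)[\rho(y)a,b]_V-[\rho(y)\rho(x)a,b]_V-[\rho(x)\rho(y)b,a]_V+\rho(y)[\rho(x)b,a]_V$; $[\rho(x)a,\rho(y)b]_V=[\rho([x,y])a,b]_V-\rho(x)[\rho(y)a,b]_V+\rho(y)\rho(x)[a,b]_V+[\rho(y)\rho(x)b,a]_V$; $[\rho(x)a,[b,c]_V]_V=[[\rho(x)b,a]_V,c]_V-\rho(x)[[b,a]_V,c]_V-[\rho(x)[a,c]_V,b]_V-[[\rho(x)c,b]_V,a]_V$.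 A $\lambda$-weighted $\mathcal{O}$-operator associated to it is a linear $T:V\to A$ with $[T(a),T(b)]=T(\rho(T(a))b-\rho(T(b))a+\lambda[a,b]_V)$ for all $a,b\in V$. *)

theory Defs
  imports Main "HOL.Vector_Spaces"
begin

(* Vector spaces over a field 'k of characteristic zero: the additive structure is the
   type's ab_group_add structure, the scalar multiplication is an explicit parameter. *)

definition jac :: "('a \<Rightarrow> 'a \<Rightarrow> 'a::ab_group_add) \<Rightarrow> 'a \<Rightarrow> 'a \<Rightarrow> 'a \<Rightarrow> 'a" where
  "jac br x y z = br (br x y) z + br (br z x) y + br (br y z) x"

definition malcev :: "('k::field_char_0 \<Rightarrow> 'a \<Rightarrow> 'a) \<Rightarrow> ('a \<Rightarrow> 'a \<Rightarrow> 'a::ab_group_add) \<Rightarrow> bool" where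
  "malcev s br \<longleftrightarrow>
     vector_space s \<and>
     (\<forall>x. Vector_Spaces.linear s s (br x)) \<and>
     (\<forall>y. Vector_Spaces.linear s s (\<lambda>x. br x y)) \<and>
     (\<forall>x y. br x y = - br y x) \<and>
     (\<forall>x y z. jac br x y (br x z) = br (jac br x y z) x)"

definition malcev_rep ::
  "('k::field_char_0 \<Rightarrow> 'a \<Rightarrow> 'a) \<Rightarrow> ('a \<Rightarrow> 'a \<Rightarrow> 'a::ab_group_add)
   \<Rightarrow> ('k \<Rightarrow> 'v \<Rightarrow> 'v) \<Rightarrow> ('a \<Rightarrow> 'v \<Rightarrow> 'v::ab_group_add) \<Rightarrow> bool" where
  "malcev_rep sA br sV \<rho> \<longleftrightarrow>
     vector_space sV \<and>
     (\<forall>x. Vector_Spaces.linear sV sV (\<rho> x)) \<and>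
     (\<forall>v. Vector_Spaces.linear sA sV (\<lambda>x. \<rho> x v)) \<and>
     (\<forall>x y z v. \<rho> (br (br x y) z) v =
        \<rho> x (\<rho> y (\<rho> z v)) - \<rho> z (\<rho> x (\<rho> y v))
        + \<rho> y (\<rho> (br z x) v) - \<rho> (br y z) (\<rho> x v))"

definition module_malcev ::
  "('k::field_char_0 \<Rightarrow> 'a \<Rightarrow> 'a) \<Rightarrow> ('a \<Rightarrow> 'a \<Rightarrow> 'a::ab_group_add)
   \<Rightarrow> ('k \<Rightarrow> 'v \<Rightarrow> 'v) \<Rightarrow> ('v \<Rightarrow> 'v \<Rightarrow> 'v::ab_group_add) \<Rightarrow> ('a \<Rightarrow> 'v \<Rightarrow> 'v) \<Rightarrow> bool" where
  "module_malcev sA br sV brV \<rho> \<longleftrightarrow>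
     malcev sV brV \<and> malcev_rep sA br sV \<rho> \<and>
     (\<forall>x y a b. \<rho> (br x y) (brV a b) =
        \<rho> x (brV (\<rho> y a) b) - brV (\<rho> y (\<rho> x a)) b - brV (\<rho> x (\<rho> y b)) a
        + \<rho> y (brV (\<rho> x b) a)) \<and>
     (\<forall>x y a b. brV (\<rho> x a) (\<rho> y b) =
        brV (\<rho> (br x y) a) b - \<rho> x (brV (\<rho> y a) b) + \<rho> y (\<rho> x (brV a b))
        + brV (\<rho> y (\<rho> x b)) a) \<and>
     (\<forall>x a b c. brV (\<rho> x a) (brV b c) =
        brV (brV (\<rho> x b) a) c - \<rho> x (brV (brV b a) c) - brV (\<rho> x (brV a c)) b
        - brV (brV (\<rho> x c) b) a)"

definition weighted_O_operator ::
  "('k::field_char_0 \<Rightarrow> 'a \<Rightarrow> 'a) \<Rightarrow> ('a \<Rightarrow> 'a \<Rightarrow> 'a::ab_group_add)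
   \<Rightarrow> ('k \<Rightarrow> 'v \<Rightarrow> 'v) \<Rightarrow> ('v \<Rightarrow> 'v \<Rightarrow> 'v::ab_group_add) \<Rightarrow> ('a \<Rightarrow> 'v \<Rightarrow> 'v)
   \<Rightarrow> 'k \<Rightarrow> ('v \<Rightarrow> 'a) \<Rightarrow> bool" where
  "weighted_O_operator sA br sV brV \<rho> lam T \<longleftrightarrow>
     Vector_Spaces.linear sV sA T \<and>
     (\<forall>a b. br (T a) (T b) = T (\<rho> (T a) b - \<rho> (T b) a + sV lam (brV a b)))"

definition malcev_hom ::
  "('k::field_char_0 \<Rightarrow> 'v \<Rightarrow> 'v) \<Rightarrow> ('v \<Rightarrow> 'v \<Rightarrow> 'v::ab_group_add)
   \<Rightarrow> ('k \<Rightarrow> 'a \<Rightarrow> 'a) \<Rightarrow> ('a \<Rightarrow> 'a \<Rightarrow> 'a::ab_group_add) \<Rightarrow> ('v \<Rightarrow> 'a) \<Rightarrow> bool" where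
  "malcev_hom sV brV sA br f \<longleftrightarrow>
     Vector_Spaces.linear sV sA f \<and> (\<forall>a b. f (brV a b) = br (f a) (f b))"

end

theory Submission
  imports Defs "HOL-Library.Product_Plus"
begin

(* On A \<times> V the bracket [(x,a),(y,b)] = ([x,y], \<rho>(x)b - \<rho>(y)a + \<lambda>[a,b]_V) is a Malcev
   bracket: in the A-component the Malcev identity is that of A, and in the V-component it splits,
   by powers of \<lambda>, into instances of the representation axiom (\<lambda>^0), of the first two
   compatibility axioms (\<lambda>^1), of the third one (\<lambda>^2) and of the Malcev identity of V (\<lambda>^3).
   The operator identity of T says precisely that the injective linear graph map a \<mapsto> (T a, a)
   carries [\<cdot>,\<cdot>]_T to this bracket, so the Malcev structure pulls back to V. *)

lemma linear_map_simps:
  assumes "Vector_Spaces.linear s1 s2 f"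
  shows "f (u + v) = f u + f v" "f (u - v) = f u - f v" "f (- u) = - f u" "f 0 = 0"
    "f (s1 k u) = s2 k (f u)"
  using assms by (simp_all add: linear_iff_module_hom module_hom.add module_hom.diff
      module_hom.neg module_hom.zero module_hom.scale)

lemma vector_space_eq_neg_self_iff:
  fixes s :: "'k::field_char_0 \<Rightarrow> 'v::ab_group_add \<Rightarrow> 'v" and w :: 'v
  assumes "vector_space s"
  shows "w = - w \<longleftrightarrow> w = 0"
proof
  assume "w = - w"
  then have "s 2 w = 0"
    using vector_space.vector_space_assms(2)[OF assms, of 1 1 w]
    by (simp add: vector_space.vector_space_assms(4)[OF assms] eq_neg_iff_add_eq_0)
  then show "w = 0"
    using vector_space.scale_eq_0_iff[OF assms] by simp
qed simp

lemma malcevD: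
  assumes "malcev s br"
  shows "vector_space s" "Vector_Spaces.linear s s (br x)" "Vector_Spaces.linear s s (\<lambda>x. br x y)"
    "br x y = - br y x" "jac br x y (br x z) = br (jac br x y z) x"
  using assms unfolding malcev_def by blast+

lemma malcev_bracket_self:
  assumes "malcev s br"
  shows "br x x = 0"
  using malcevD(4)[OF assms, of x x] vector_space_eq_neg_self_iff[OF malcevD(1)[OF assms]]
  by blast

lemma jac_hom:
  assumes "\<And>u v. f (u + v) = f u + f v" "\<And>u v. f (b u v) = B (f u) (f v)"
  shows "f (jac b x y z) = jac B (f x) (f y) (f z)"
  using assms by (simp add: jac_def)

lemma malcev_pullback:
  assumes B: "malcev s2 B" and f: "Vector_Spaces.linear s1 s2 f" "inj f"
    and hom: "\<And>u v. f (b u v) = B (f u) (f v)"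
  shows "malcev s1 b"
proof -
  note f_simps = linear_map_simps[OF f(1)]
  note B_simps = linear_map_simps[OF malcevD(2)[OF B]] linear_map_simps[OF malcevD(3)[OF B]]
  have vs: "vector_space s1" "vector_space s2"
    using f(1) by (simp_all add: linear_iff)
  have "Vector_Spaces.linear s1 s1 (b x)" for x
    unfolding linear_iff using vs by (auto intro!: injD[OF f(2)] simp: hom f_simps B_simps)
  moreover have "Vector_Spaces.linear s1 s1 (\<lambda>x. b x y)" for y
    unfolding linear_iff using vs by (auto intro!: injD[OF f(2)] simp: hom f_simps B_simps)
  moreover have "b x y = - b y x" for x y
    by (rule injD[OF f(2)]) (simp add: hom f_simps malcevD(4)[OF B, of "f x"])
  moreover have "jac b x y (b x z) = b (jac b x y z) x" for x y z
    by (rule injD[OF f(2)])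
      (simp add: jac_hom[where B = B] hom f_simps malcevD(5)[OF B])
  ultimately show ?thesis
    unfolding malcev_def using vs(1) by blast
qed

definition scale_prod :: "('k \<Rightarrow> 'a \<Rightarrow> 'a) \<Rightarrow> ('k \<Rightarrow> 'v \<Rightarrow> 'v) \<Rightarrow> 'k \<Rightarrow> 'a \<times> 'v \<Rightarrow> 'a \<times> 'v" where
  "scale_prod s1 s2 k p = (s1 k (fst p), s2 k (snd p))"

lemma vector_space_scale_prod:
  assumes "vector_space s1" "vector_space s2"
  shows "vector_space (scale_prod s1 s2)"
  using assms unfolding vector_space_def scale_prod_def by (simp add: prod_eq_iff)

locale module_malcev_algebra =
  fixes sA :: "'k::field_char_0 \<Rightarrow> 'a::ab_group_add \<Rightarrow> 'a"
    and br :: "'a \<Rightarrow> 'a \<Rightarrow> 'a"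
    and sV :: "'k \<Rightarrow> 'v::ab_group_add \<Rightarrow> 'v"
    and brV :: "'v \<Rightarrow> 'v \<Rightarrow> 'v"
    and \<rho> :: "'a \<Rightarrow> 'v \<Rightarrow> 'v"
  assumes malcev_A: "malcev sA br"
    and module_malcev: "module_malcev sA br sV brV \<rho>"
begin

lemma malcev_V: "malcev sV brV"
  using module_malcev unfolding module_malcev_def by blast

lemma rho_linear_left: "Vector_Spaces.linear sA sV (\<lambda>x. \<rho> x v)"
  and rho_linear_right: "Vector_Spaces.linear sV sV (\<rho> x)"
  and rep: "\<rho> (br (br x y) z) v =
      \<rho> x (\<rho> y (\<rho> z v)) - \<rho> z (\<rho> x (\<rho> y v)) + \<rho> y (\<rho> (br z x) v) - \<rho> (br y z) (\<rho> x v)"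
  using module_malcev unfolding module_malcev_def malcev_rep_def by blast+

lemma compat1: "\<rho> (br x y) (brV a b) =
      \<rho> x (brV (\<rho> y a) b) - brV (\<rho> y (\<rho> x a)) b - brV (\<rho> x (\<rho> y b)) a + \<rho> y (brV (\<rho> x b) a)"
  and compat2: "brV (\<rho> x a) (\<rho> y b) =
      brV (\<rho> (br x y) a) b - \<rho> x (brV (\<rho> y a) b) + \<rho> y (\<rho> x (brV a b)) + brV (\<rho> y (\<rho> x b)) a"
  and compat3: "brV (\<rho> x a) (brV b c) =
      brV (brV (\<rho> x b) a) c - \<rho> x (brV (brV b a) c) - brV (\<rho> x (brV a c)) b - brV (brV (\<rho> x c) b) a"
  using module_malcev unfolding module_malcev_def by blast+

lemma br_antisym: "br x y = - br y x"
  and brV_antisym: "brV a b = - brV b a"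
  and br_self: "br x x = 0"
  and brV_self: "brV a a = 0"
  using malcevD(4) malcev_bracket_self malcev_A malcev_V by blast+

lemmas linear_expand =
  linear_map_simps[OF malcevD(2)[OF malcev_A]] linear_map_simps[OF malcevD(3)[OF malcev_A]]
  linear_map_simps[OF malcevD(2)[OF malcev_V]] linear_map_simps[OF malcevD(3)[OF malcev_V]]
  linear_map_simps[OF rho_linear_left] linear_map_simps[OF rho_linear_right]

lemma module_V: "module sV"
  using malcevD(1)[OF malcev_V] by (simp add: module_iff_vector_space)

lemmas scale_V_expand =
  module.scale_right_distrib[OF module_V] module.scale_right_diff_distrib[OF module_V]
  module.scale_minus_right[OF module_V] module.scale_scale[OF module_V]

lemma vector_space_prod: "vector_space (scale_prod sA sV)"
  using malcevD(1)[OF malcev_A] malcevD(1)[OF malcev_V] by (rule vector_space_scale_prod)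

definition semidirect_bracket :: "'k \<Rightarrow> 'a \<times> 'v \<Rightarrow> 'a \<times> 'v \<Rightarrow> 'a \<times> 'v" where
  "semidirect_bracket lam P Q =
    (br (fst P) (fst Q),
     \<rho> (fst P) (snd Q) - \<rho> (fst Q) (snd P) + sV lam (brV (snd P) (snd Q)))"

lemma semidirect_bracket_linear_right:
  "Vector_Spaces.linear (scale_prod sA sV) (scale_prod sA sV) (semidirect_bracket lam P)"
  unfolding linear_iff
  by (simp add: vector_space_prod semidirect_bracket_def
      scale_prod_def linear_expand scale_V_expand algebra_simps mult.commute)

lemma semidirect_bracket_linear_left:
  "Vector_Spaces.linear (scale_prod sA sV) (scale_prod sA sV) (\<lambda>P. semidirect_bracket lam P Q)"
  unfolding linear_iff
  by (simp add: vector_space_prod semidirect_bracket_def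
      scale_prod_def linear_expand scale_V_expand algebra_simps mult.commute)

lemma semidirect_bracket_antisym: "semidirect_bracket lam P Q = - semidirect_bracket lam Q P"
  using br_antisym[of "fst P" "fst Q"] brV_antisym[of "snd P" "snd Q"]
  by (simp add: semidirect_bracket_def scale_V_expand)

definition rep_defect :: "'a \<Rightarrow> 'a \<Rightarrow> 'a \<Rightarrow> 'v \<Rightarrow> 'v" where
  "rep_defect x y z v = \<rho> (br (br x y) z) v -
    (\<rho> x (\<rho> y (\<rho> z v)) - \<rho> z (\<rho> x (\<rho> y v)) + \<rho> y (\<rho> (br z x) v) - \<rho> (br y z) (\<rho> x v))"

definition compat1_defect :: "'a \<Rightarrow> 'a \<Rightarrow> 'v \<Rightarrow> 'v \<Rightarrow> 'v" where
  "compat1_defect x y a b = \<rho> (br x y) (brV a b) -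
    (\<rho> x (brV (\<rho> y a) b) - brV (\<rho> y (\<rho> x a)) b - brV (\<rho> x (\<rho> y b)) a + \<rho> y (brV (\<rho> x b) a))"

definition compat2_defect :: "'a \<Rightarrow> 'a \<Rightarrow> 'v \<Rightarrow> 'v \<Rightarrow> 'v" where
  "compat2_defect x y a b = brV (\<rho> x a) (\<rho> y b) -
    (brV (\<rho> (br x y) a) b - \<rho> x (brV (\<rho> y a) b) + \<rho> y (\<rho> x (brV a b)) + brV (\<rho> y (\<rho> x b)) a)"

definition compat3_defect :: "'a \<Rightarrow> 'v \<Rightarrow> 'v \<Rightarrow> 'v \<Rightarrow> 'v" where
  "compat3_defect x a b c = brV (\<rho> x a) (brV b c) -
    (brV (brV (\<rho> x b) a) c - \<rho> x (brV (brV b a) c) - brV (\<rho> x (brV a c)) b - brV (brV (\<rho> x c) b) a)"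

lemma defects_vanish:
  "rep_defect x y z v = 0" "compat1_defect x y a b = 0" "compat2_defect x y a b = 0"
  "compat3_defect x a b c = 0"
  by (simp_all add: rep_defect_def rep compat1_defect_def compat1 compat2_defect_def compat2
      compat3_defect_def compat3)

lemma semidirect_malcev_defect_snd:
  fixes lam :: 'k
  defines "sb \<equiv> semidirect_bracket lam"
  shows "snd (jac sb (x, a) (y, b) (sb (x, a) (z, c))) - snd (sb (jac sb (x, a) (y, b) (z, c)) (x, a)) =
    rep_defect z y x a + rep_defect y x z a + rep_defect x z x b - rep_defect x y x c
      - rep_defect y x x c
    + sV lam (- compat1_defect z y a a - compat2_defect z y a a + compat1_defect z x a b
      + compat2_defect z x a b + compat1_defect x y a c + compat2_defect x y c a
      + compat2_defect x x b c)
    + sV (lam * lam) (compat3_defect z a a b - compat3_defect y c a a - compat3_defect y a a c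
      - compat3_defect x c a b - compat3_defect x a b c - compat3_defect x b c a
      - compat3_defect x a c b)
    + sV (lam * lam * lam) (jac brV a b (brV a c) - brV (jac brV a b c) a)"
  unfolding sb_def
  \<comment> \<open>antisymmetry would loop as a simp rule, so only the instances needed are supplied\<close>
  by (simp add: rep_defect_def compat1_defect_def compat2_defect_def compat3_defect_def jac_def
      semidirect_bracket_def linear_expand scale_V_expand br_self brV_self
      br_antisym[of y "br x z"] br_antisym[of y x] br_antisym[of z x] br_antisym[of z y]
      brV_antisym[of "\<rho> y a" "\<rho> x c"] brV_antisym[of "\<rho> z a" "\<rho> x b"]
      brV_antisym[of "\<rho> z a" "\<rho> y a"] brV_antisym[of "brV a b" "\<rho> x c"]
      brV_antisym[of "brV a b" "\<rho> z a"] brV_antisym[of b "\<rho> x c"]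
      brV_antisym[of b "\<rho> z a"] brV_antisym[of b "brV a c"] brV_antisym[of b a]
      brV_antisym[of c a] brV_antisym[of c b] algebra_simps)

lemma semidirect_bracket_malcev_identity:
  fixes lam :: 'k
  defines "sb \<equiv> semidirect_bracket lam"
  shows "jac sb P Q (sb P R) = sb (jac sb P Q R) P"
proof -
  obtain x a y b z c where P: "P = (x, a)" and Q: "Q = (y, b)" and R: "R = (z, c)"
    by (cases P, cases Q, cases R) blast
  have "fst (jac sb P Q (sb P R)) = fst (sb (jac sb P Q R) P)"
    using malcevD(5)[OF malcev_A] by (simp add: sb_def semidirect_bracket_def jac_def)
  moreover have "snd (jac sb P Q (sb P R)) = snd (sb (jac sb P Q R) P)"
    using semidirect_malcev_defect_snd[of lam x a y b z c] malcevD(5)[OF malcev_V, of a b c]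
    by (simp add: P Q R sb_def defects_vanish module.scale_zero_right[OF module_V])
  ultimately show ?thesis
    by (simp add: prod_eq_iff)
qed

lemma malcev_semidirect_bracket: "malcev (scale_prod sA sV) (semidirect_bracket lam)"
  unfolding malcev_def
  using vector_space_prod semidirect_bracket_linear_right semidirect_bracket_linear_left
    semidirect_bracket_antisym semidirect_bracket_malcev_identity
  by blast

lemma malcev_O_operator_bracket:
  assumes "weighted_O_operator sA br sV brV \<rho> lam T"
  shows "malcev sV (\<lambda>a b. \<rho> (T a) b - \<rho> (T b) a + sV lam (brV a b))"
proof (rule malcev_pullback[OF malcev_semidirect_bracket])
  have T: "Vector_Spaces.linear sV sA T"
    and O: "\<And>a b. br (T a) (T b) = T (\<rho> (T a) b - \<rho> (T b) a + sV lam (brV a b))"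
    using assms unfolding weighted_O_operator_def by blast+
  show "Vector_Spaces.linear sV (scale_prod sA sV) (\<lambda>a. (T a, a))"
    using T vector_space_prod unfolding linear_iff by (simp add: scale_prod_def)
  show "inj (\<lambda>a. (T a, a))"
    by (rule injI) simp
  show "(T (\<rho> (T a) b - \<rho> (T b) a + sV lam (brV a b)), \<rho> (T a) b - \<rho> (T b) a + sV lam (brV a b))
      = semidirect_bracket lam (T a, a) (T b, b)" for a b
    by (simp add: semidirect_bracket_def O)
qed

end

theorem corollary4p8:
  fixes sA :: "'k::field_char_0 \<Rightarrow> 'a::ab_group_add \<Rightarrow> 'a"
    and br :: "'a \<Rightarrow> 'a \<Rightarrow> 'a"
    and sV :: "'k \<Rightarrow> 'v::ab_group_add \<Rightarrow> 'v"
    and brV :: "'v \<Rightarrow> 'v \<Rightarrow> 'v"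
    and \<rho> :: "'a \<Rightarrow> 'v \<Rightarrow> 'v"
    and lam :: 'k
    and T :: "'v \<Rightarrow> 'a"
  assumes "malcev sA br"
    and "module_malcev sA br sV brV \<rho>"
    and "weighted_O_operator sA br sV brV \<rho> lam T"
  shows "malcev sV (\<lambda>a b. \<rho> (T a) b - \<rho> (T b) a + sV lam (brV a b))
    \<and> malcev_hom sV (\<lambda>a b. \<rho> (T a) b - \<rho> (T b) a + sV lam (brV a b)) sA br T"
proof
  interpret module_malcev_algebra sA br sV brV \<rho>
    using assms(1,2) by unfold_locales
  show "malcev sV (\<lambda>a b. \<rho> (T a) b - \<rho> (T b) a + sV lam (brV a b))"
    using assms(3) by (rule malcev_O_operator_bracket)
  show "malcev_hom sV (\<lambda>a b. \<rho> (T a) b - \<rho> (T b) a + sV lam (brV a b)) sA br T"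
    using assms(3) unfolding weighted_O_operator_def malcev_hom_def by simp
qed

end
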